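(* Let $X$ be a Banach space, $D\subset X$ closed, bounded and convex, and $\tau$ a locally convex topology on $D$ containing the relative weak topology of $D$. Let $C$ be a convex subset of $D$, $\varepsilon>0$, $n,k\in\mathbb{N}$ and $\{x_1,\dots,x_k\}\subset X$. If $(\widetilde O_i)_{i=1}^n$ are nonempty sets in $\tau|_C$, then there is another $n$-tuple $(O_i)_{i=1}^n$ of nonempty $\tau|_C$-open sets with $O_i\subset\widetilde O_i$ such that $$\operatorname{diam}\Big(\sum_{i=1}^n\lambda(i)O_i\Big)\le 2\,d\Big(\{x_1,\dots,x_k\},\sum_{i=1}^n\lambda(i)O_i\Big)+\varepsilon\quad\text{for all }\lambda\in S^+_{\ell_1^n}.$$
   Context: $\tau|_C$ is the topology induced by $\tau$ on $C$; locally convex means having a basis of convex open sets. $S^+_{\ell_1^n}=\{\lambda\in\mathbb{R}^n:\lambda(i)\ge0,\ \sum_i\lambda(i)=1\}$. Sums of sets are Minkowski sums and $d(A,B)=\inf\{\|a-b\|:a\in A,b\in B\}$. *)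

theory Defs
  imports "HOL-Analysis.Analysis"
begin

definition weak_topology :: "('a::real_normed_vector) topology" where
  "weak_topology = topology_generated_by
     {{x. f x \<in> U} | f U. bounded_linear (f :: 'a \<Rightarrow> real) \<and> open U}"

definition locally_convex_topology :: "('a::real_vector) topology \<Rightarrow> bool" where
  "locally_convex_topology T \<longleftrightarrow>
     (\<forall>U x. openin T U \<and> x \<in> U \<longrightarrow> (\<exists>V. openin T V \<and> convex V \<and> x \<in> V \<and> V \<subseteq> U))"

definition scaled_msum :: "nat \<Rightarrow> (nat \<Rightarrow> real) \<Rightarrow> (nat \<Rightarrow> 'a::real_vector set) \<Rightarrow> 'a set" where
  "scaled_msum n lam Os =
     {(\<Sum>i\<in>{1..n}. lam i *\<^sub>R y i) | y. \<forall>i\<in>{1..n}. y i \<in> Os i}"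

text \<open>Positive part of the unit sphere of l_1^n (the standard simplex).\<close>
definition simplex_pos :: "nat \<Rightarrow> (nat \<Rightarrow> real) set" where
  "simplex_pos n = {lam. (\<forall>i\<in>{1..n}. 0 \<le> lam i) \<and> (\<Sum>i\<in>{1..n}. lam i) = 1}"

end

theory Submission
  imports Defs
begin

text \<open>
  Only two features of \<open>\<tau>\<close> matter: the preimages of open sets under bounded linear
  functionals are \<open>\<tau>\<close>-open, and \<open>\<tau>|\<^sub>C\<close>-open sets lie in the bounded set \<open>D\<close>.

  By Hahn-Banach, \<open>y \<mapsto> \<parallel>\<Sum>\<^sub>i \<lambda>(i) y\<^sub>i - p\<parallel>\<close> is lower semicontinuous for the product of the weak
  topologies. Hence shrinking the \<open>O\<^sub>i\<close> to a box around a point where this function nearly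
  attains its supremum makes its oscillation on the box at most \<open>\<delta>\<close>. Doing this successively
  for the finitely many pairs \<open>(\<lambda>, x\<^sub>j)\<close> with \<open>\<lambda>\<close> on a fine grid, and using boundedness of \<open>D\<close>
  to pass from the grid to all of \<open>S\<^sup>+\<close>, gives \<open>\<parallel>a - x\<^sub>j\<parallel> \<le> \<parallel>z - x\<^sub>j\<parallel> + \<epsilon>/2\<close> for all
  \<open>a, z \<in> \<Sum>\<^sub>i \<lambda>(i) O\<^sub>i\<close>. With the same bound for a second point \<open>b\<close> the triangle inequality
  gives \<open>\<parallel>a - b\<parallel> \<le> 2\<parallel>z - x\<^sub>j\<parallel> + \<epsilon>\<close>.
\<close>

section \<open>Hahn-Banach for sublinear functionals\<close>

definition sublinear :: "('a::real_vector \<Rightarrow> real) \<Rightarrow> bool" where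
  "sublinear p \<longleftrightarrow> (\<forall>x y. p (x + y) \<le> p x + p y) \<and> (\<forall>c x. 0 < c \<longrightarrow> p (c *\<^sub>R x) = c * p x)"

lemma sublinear_norm: "sublinear norm"
  by (simp add: sublinear_def norm_triangle_ineq)

text \<open>A linear functional on a subspace, dominated by \<open>p\<close>, is represented by its graph, so that
  Zorn's lemma can be applied to set inclusion.\<close>

definition dominated_linear_graph :: "('a::real_vector \<Rightarrow> real) \<Rightarrow> ('a \<times> real) set \<Rightarrow> bool" where
  "dominated_linear_graph p G \<longleftrightarrow>
     (0, 0) \<in> G \<and>
     (\<forall>x a y b. (x, a) \<in> G \<longrightarrow> (y, b) \<in> G \<longrightarrow> (x + y, a + b) \<in> G) \<and>
     (\<forall>c x a. (x, a) \<in> G \<longrightarrow> (c *\<^sub>R x, c * a) \<in> G) \<and>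
     (\<forall>x a b. (x, a) \<in> G \<longrightarrow> (x, b) \<in> G \<longrightarrow> a = b) \<and>
     (\<forall>x a. (x, a) \<in> G \<longrightarrow> a \<le> p x)"

lemma dominated_linear_graphD:
  assumes "dominated_linear_graph p G"
  shows "(0, 0) \<in> G"
    and "(x, a) \<in> G \<Longrightarrow> (y, b) \<in> G \<Longrightarrow> (x + y, a + b) \<in> G"
    and "(x, a) \<in> G \<Longrightarrow> (c *\<^sub>R x, c * a) \<in> G"
    and "(x, a) \<in> G \<Longrightarrow> (x, b) \<in> G \<Longrightarrow> a = b"
    and "(x, a) \<in> G \<Longrightarrow> a \<le> p x"
  using assms unfolding dominated_linear_graph_def by blast+

lemma dominated_linear_graph_Union_chain:
  assumes "\<C> \<in> chains {G. dominated_linear_graph p G}" and "\<C> \<noteq> {}"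
  shows "dominated_linear_graph p (\<Union>\<C>)"
proof -
  have dom: "dominated_linear_graph p G" if "G \<in> \<C>" for G
    using assms(1) that unfolding chains_def by blast
  have "\<forall>G\<in>\<C>. \<forall>H\<in>\<C>. G \<subseteq> H \<or> H \<subseteq> G"
    using assms(1) by (auto simp: chains_def chain_subset_def)
  then have common: "\<exists>G\<in>\<C>. u \<in> G \<and> w \<in> G" if "u \<in> \<Union>\<C>" "w \<in> \<Union>\<C>" for u w
    using that by blast
  obtain G0 where "G0 \<in> \<C>" using assms(2) by blast
  show ?thesis
    unfolding dominated_linear_graph_def
  proof (intro conjI allI impI)
    show "(0, 0) \<in> \<Union>\<C>" using dominated_linear_graphD(1)[OF dom] \<open>G0 \<in> \<C>\<close> by blast
  next
    fix x a y b assume "(x, a) \<in> \<Union>\<C>" "(y, b) \<in> \<Union>\<C>"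
    then obtain G where "G \<in> \<C>" "(x, a) \<in> G" "(y, b) \<in> G" using common by blast
    then show "(x + y, a + b) \<in> \<Union>\<C>" using dominated_linear_graphD(2)[OF dom] by blast
  next
    fix c x a assume "(x, a) \<in> \<Union>\<C>"
    then show "(c *\<^sub>R x, c * a) \<in> \<Union>\<C>" using dominated_linear_graphD(3)[OF dom] by blast
  next
    fix x a b assume "(x, a) \<in> \<Union>\<C>" "(x, b) \<in> \<Union>\<C>"
    then obtain G where "G \<in> \<C>" "(x, a) \<in> G" "(x, b) \<in> G" using common by blast
    then show "a = b" using dominated_linear_graphD(4)[OF dom] by blast
  next
    fix x a assume "(x, a) \<in> \<Union>\<C>"
    then show "a \<le> p x" using dominated_linear_graphD(5)[OF dom] by blast
  qed
qed

lemma dominated_linear_graph_extension_value: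
  assumes p: "sublinear p" and G: "dominated_linear_graph p G"
  obtains c where "\<And>m a. (m, a) \<in> G \<Longrightarrow> a - p (m - x0) \<le> c"
    and "\<And>m a. (m, a) \<in> G \<Longrightarrow> c \<le> p (m + x0) - a"
proof -
  define L where "L = {a - p (m - x0) | m a. (m, a) \<in> G}"
  have below: "a - p (m - x0) \<le> p (m' + x0) - a'" if "(m, a) \<in> G" "(m', a') \<in> G" for m a m' a'
  proof -
    have "a + a' \<le> p ((m - x0) + (m' + x0))"
      using dominated_linear_graphD(5)[OF G dominated_linear_graphD(2)[OF G that]] by simp
    also have "\<dots> \<le> p (m - x0) + p (m' + x0)"
      using p unfolding sublinear_def by blast
    finally show ?thesis by simp
  qed
  have "L \<noteq> {}" using dominated_linear_graphD(1)[OF G] unfolding L_def by blast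
  moreover have "bdd_above L"
    unfolding L_def bdd_above_def using below[OF _ dominated_linear_graphD(1)[OF G]] by auto
  ultimately show ?thesis
    using below by (intro that[of "Sup L"] cSup_upper cSup_least) (auto simp: L_def)
qed

lemma dominated_linear_graph_extension_dominated:
  assumes p: "sublinear p" and G: "dominated_linear_graph p G" and "(m, a) \<in> G"
    and lower: "\<And>m a. (m, a) \<in> G \<Longrightarrow> a - p (m - x0) \<le> c"
    and upper: "\<And>m a. (m, a) \<in> G \<Longrightarrow> c \<le> p (m + x0) - a"
  shows "a + t * c \<le> p (m + t *\<^sub>R x0)"
proof -
  have hom: "p (s *\<^sub>R x) = s * p x" if "0 < s" for s x
    using p that by (simp add: sublinear_def)
  have scaled: "((1 / s) *\<^sub>R m, (1 / s) * a) \<in> G" for s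
    using dominated_linear_graphD(3)[OF G \<open>(m, a) \<in> G\<close>] .
  show ?thesis
  proof (cases t "0 :: real" rule: linorder_cases)
    case less
    define s where "s = - t"
    have "0 < s" using less by (simp add: s_def)
    have "a - s * p ((1 / s) *\<^sub>R m - x0) \<le> s * c"
      using lower[OF scaled[of s]] \<open>0 < s\<close> by (simp add: field_simps)
    moreover have "s *\<^sub>R ((1 / s) *\<^sub>R m - x0) = m + t *\<^sub>R x0"
      using \<open>0 < s\<close> by (simp add: s_def scaleR_diff_right)
    then have "s * p ((1 / s) *\<^sub>R m - x0) = p (m + t *\<^sub>R x0)"
      using hom[OF \<open>0 < s\<close>] by metis
    ultimately show ?thesis by (simp add: s_def)
  next
    case equal
    then show ?thesis using dominated_linear_graphD(5)[OF G \<open>(m, a) \<in> G\<close>] by simp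
  next
    case greater
    have "t * c \<le> t * p ((1 / t) *\<^sub>R m + x0) - a"
      using upper[OF scaled[of t]] greater by (simp add: field_simps)
    moreover have "t *\<^sub>R ((1 / t) *\<^sub>R m + x0) = m + t *\<^sub>R x0"
      using greater by (simp add: scaleR_add_right)
    then have "t * p ((1 / t) *\<^sub>R m + x0) = p (m + t *\<^sub>R x0)"
      using hom[OF greater] by metis
    ultimately show ?thesis by simp
  qed
qed

lemma dominated_linear_graph_coeff_unique:
  assumes G: "dominated_linear_graph p G" and x0: "x0 \<notin> fst ` G"
    and "(m1, a1) \<in> G" "(m2, a2) \<in> G" and eq: "m1 + t1 *\<^sub>R x0 = m2 + t2 *\<^sub>R x0"
  shows "t1 = t2"
proof (rule ccontr)
  assume "t1 \<noteq> t2"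
  have "(t2 - t1) *\<^sub>R x0 = m1 + (-1) *\<^sub>R m2"
    using eq by (simp add: algebra_simps)
  then have "(1 / (t2 - t1)) *\<^sub>R ((t2 - t1) *\<^sub>R x0) = (1 / (t2 - t1)) *\<^sub>R (m1 + (-1) *\<^sub>R m2)"
    by simp
  then have "x0 = (1 / (t2 - t1)) *\<^sub>R (m1 + (-1) *\<^sub>R m2)"
    using \<open>t1 \<noteq> t2\<close> by simp
  moreover have "(m1 + (-1) *\<^sub>R m2, a1 + (-1) * a2) \<in> G"
    using assms(3,4) dominated_linear_graphD(2,3)[OF G] by blast
  ultimately have "(x0, (1 / (t2 - t1)) * (a1 + (-1) * a2)) \<in> G"
    using dominated_linear_graphD(3)[OF G] by metis
  then show False using x0 by force
qed

definition extend_graph :: "('a::real_vector \<times> real) set \<Rightarrow> 'a \<Rightarrow> real \<Rightarrow> ('a \<times> real) set" where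
  "extend_graph G x0 c = {(m + t *\<^sub>R x0, a + t * c) | m a t. (m, a) \<in> G}"

lemma extend_graphI: "(m, a) \<in> G \<Longrightarrow> (m + t *\<^sub>R x0, a + t * c) \<in> extend_graph G x0 c"
  unfolding extend_graph_def by blast

lemma extend_graphE:
  assumes "(x, b) \<in> extend_graph G x0 c"
  obtains m a t where "(m, a) \<in> G" and "x = m + t *\<^sub>R x0" and "b = a + t * c"
  using assms unfolding extend_graph_def by blast

lemma dominated_linear_graph_extend_graph:
  assumes G: "dominated_linear_graph p G" and x0: "x0 \<notin> fst ` G"
    and dominated: "\<And>m a t. (m, a) \<in> G \<Longrightarrow> a + t * c \<le> p (m + t *\<^sub>R x0)"
  shows "dominated_linear_graph p (extend_graph G x0 c)"
  unfolding dominated_linear_graph_def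
proof (intro conjI allI impI)
  show "(0, 0) \<in> extend_graph G x0 c"
    using extend_graphI[OF dominated_linear_graphD(1)[OF G], of 0] by simp
next
  fix x a y b assume "(x, a) \<in> extend_graph G x0 c" "(y, b) \<in> extend_graph G x0 c"
  then obtain m1 a1 t1 m2 a2 t2 where "(m1, a1) \<in> G" "(m2, a2) \<in> G"
    and "x = m1 + t1 *\<^sub>R x0" "a = a1 + t1 * c" "y = m2 + t2 *\<^sub>R x0" "b = a2 + t2 * c"
    by (elim extend_graphE)
  then show "(x + y, a + b) \<in> extend_graph G x0 c"
    using extend_graphI[OF dominated_linear_graphD(2)[OF G], of m1 a1 m2 a2 "t1 + t2"]
    by (simp add: algebra_simps)
next
  fix r x a assume "(x, a) \<in> extend_graph G x0 c"
  then obtain m a1 t where "(m, a1) \<in> G" "x = m + t *\<^sub>R x0" "a = a1 + t * c"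
    by (elim extend_graphE)
  then show "(r *\<^sub>R x, r * a) \<in> extend_graph G x0 c"
    using extend_graphI[OF dominated_linear_graphD(3)[OF G], of m a1 r "r * t"]
    by (simp add: algebra_simps)
next
  fix x a b assume "(x, a) \<in> extend_graph G x0 c" "(x, b) \<in> extend_graph G x0 c"
  then obtain m1 a1 t1 m2 a2 t2 where "(m1, a1) \<in> G" "(m2, a2) \<in> G"
    and "x = m1 + t1 *\<^sub>R x0" "a = a1 + t1 * c" "x = m2 + t2 *\<^sub>R x0" "b = a2 + t2 * c"
    by (elim extend_graphE)
  moreover from this have "t1 = t2"
    using dominated_linear_graph_coeff_unique[OF G x0] by metis
  ultimately show "a = b" using dominated_linear_graphD(4)[OF G] by auto
next
  fix x a assume "(x, a) \<in> extend_graph G x0 c"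
  then show "a \<le> p x" using dominated by (elim extend_graphE) simp
qed

lemma dominated_linear_graph_extend:
  assumes p: "sublinear p" and G: "dominated_linear_graph p G" and x0: "x0 \<notin> fst ` G"
  obtains G' where "dominated_linear_graph p G'" and "G \<subseteq> G'" and "x0 \<in> fst ` G'"
proof -
  obtain c where "\<And>m a. (m, a) \<in> G \<Longrightarrow> a - p (m - x0) \<le> c"
    and "\<And>m a. (m, a) \<in> G \<Longrightarrow> c \<le> p (m + x0) - a"
    using dominated_linear_graph_extension_value[OF p G] by blast
  then have "dominated_linear_graph p (extend_graph G x0 c)"
    using dominated_linear_graph_extension_dominated[OF p G]
    by (intro dominated_linear_graph_extend_graph[OF G x0]) blast
  moreover have "G \<subseteq> extend_graph G x0 c" using extend_graphI[of _ _ G 0] by force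
  moreover have "x0 \<in> fst ` extend_graph G x0 c"
    using extend_graphI[OF dominated_linear_graphD(1)[OF G], of 1] by force
  ultimately show ?thesis using that by blast
qed

lemma exists_total_dominated_linear_graph:
  assumes p: "sublinear p" and G0: "dominated_linear_graph p G0"
  obtains M where "dominated_linear_graph p M" and "G0 \<subseteq> M" and "fst ` M = UNIV"
proof -
  let ?A = "{G. dominated_linear_graph p G \<and> G0 \<subseteq> G}"
  have "\<exists>U\<in>?A. \<forall>G\<in>\<C>. G \<subseteq> U" if \<C>: "\<C> \<in> chains ?A" for \<C>
  proof (cases "\<C> = {}")
    case True
    then show ?thesis using G0 by blast
  next
    case False
    have "\<C> \<in> chains {G. dominated_linear_graph p G}"
      using \<C> unfolding chains_def by blast
    then have "dominated_linear_graph p (\<Union>\<C>)"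
      using dominated_linear_graph_Union_chain False by blast
    moreover have "G0 \<subseteq> \<Union>\<C>"
      using \<C> False unfolding chains_def by blast
    ultimately show ?thesis by blast
  qed
  then have "\<exists>M\<in>?A. \<forall>G\<in>?A. M \<subseteq> G \<longrightarrow> G = M"
    by (intro Zorn_Lemma2) blast
  then obtain M where M: "dominated_linear_graph p M" "G0 \<subseteq> M"
    and maximal: "\<forall>G\<in>?A. M \<subseteq> G \<longrightarrow> G = M"
    by blast
  have "x \<in> fst ` M" for x
  proof (rule ccontr)
    assume "x \<notin> fst ` M"
    then obtain G where "dominated_linear_graph p G" "M \<subseteq> G" "x \<in> fst ` G"
      using dominated_linear_graph_extend[OF p M(1)] by blast
    then show False using maximal M(2) \<open>x \<notin> fst ` M\<close> by blast
  qed
  then show ?thesis using that M by blast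
qed

theorem hahn_banach_sublinear:
  assumes p: "sublinear p" and G0: "dominated_linear_graph p G0"
  obtains f where "linear f" and "\<And>x. f x \<le> p x" and "\<And>x a. (x, a) \<in> G0 \<Longrightarrow> f x = a"
proof -
  obtain M where M: "dominated_linear_graph p M" "G0 \<subseteq> M" and total: "fst ` M = UNIV"
    using exists_total_dominated_linear_graph[OF p G0] .
  define f where "f x = (THE a. (x, a) \<in> M)" for x
  have f_eq: "f x = a" if "(x, a) \<in> M" for x a
    unfolding f_def using that dominated_linear_graphD(4)[OF M(1)] by blast
  have graph: "(x, f x) \<in> M" for x
    using total f_eq by (metis UNIV_I imageE prod.collapse)
  have "linear f"
  proof (rule linearI)
    show "f (x + y) = f x + f y" for x y
      using f_eq dominated_linear_graphD(2)[OF M(1) graph graph] .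
    show "f (c *\<^sub>R x) = c *\<^sub>R f x" for c x
      using f_eq dominated_linear_graphD(3)[OF M(1) graph] by simp
  qed
  moreover have "f x \<le> p x" for x
    using dominated_linear_graphD(5)[OF M(1) graph] .
  ultimately show ?thesis using that f_eq M(2) by blast
qed

lemma dominated_linear_graph_norm_line:
  fixes v :: "'a::real_normed_vector"
  shows "dominated_linear_graph norm (range (\<lambda>t. (t *\<^sub>R v, t * norm v)))"
    (is "dominated_linear_graph norm ?L")
  unfolding dominated_linear_graph_def
proof (intro conjI allI impI)
  have L: "(x, a) \<in> ?L \<longleftrightarrow> (\<exists>t. x = t *\<^sub>R v \<and> a = t * norm v)" for x a
    by auto
  show "(0, 0) \<in> ?L" unfolding L by (intro exI[of _ 0]) simp
  show "(x + y, a + b) \<in> ?L" if "(x, a) \<in> ?L" "(y, b) \<in> ?L" for x a y b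
    using that unfolding L by (metis distrib_right scaleR_left_distrib)
  show "(c *\<^sub>R x, c * a) \<in> ?L" if "(x, a) \<in> ?L" for c x a
    using that unfolding L by (metis mult.assoc scaleR_scaleR)
  show "a = b" if "(x, a) \<in> ?L" "(x, b) \<in> ?L" for x a b
    using that unfolding L by (metis mult_cancel_right norm_eq_zero scaleR_cancel_right)
  show "a \<le> norm x" if "(x, a) \<in> ?L" for x a
    using that unfolding L by (auto simp: mult_right_mono)
qed

lemma exists_norming_functional:
  fixes v :: "'a::real_normed_vector"
  obtains f where "bounded_linear f" and "\<And>x. \<bar>f x\<bar> \<le> norm x" and "f v = norm v"
proof -
  obtain f where "linear f" and le: "\<And>x. f x \<le> norm x"
    and on_line: "\<And>x a. (x, a) \<in> range (\<lambda>t. (t *\<^sub>R v, t * norm v)) \<Longrightarrow> f x = a"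
    using hahn_banach_sublinear[OF sublinear_norm dominated_linear_graph_norm_line[of v]] by blast
  have abs_le: "\<bar>f x\<bar> \<le> norm x" for x
    using le[of x] le[of "- x"] linear_neg[OF \<open>linear f\<close>, of x] by auto
  have "bounded_linear f"
    by (rule bounded_linear_intro[where K = 1])
      (use \<open>linear f\<close> abs_le in \<open>auto simp: linear_add linear_scale\<close>)
  moreover have "(v, norm v) \<in> range (\<lambda>t. (t *\<^sub>R v, t * norm v))"
    by (rule image_eqI[where x = 1]) simp_all
  then have "f v = norm v" by (rule on_line)
  ultimately show ?thesis using that abs_le by blast
qed

section \<open>Shrinking families of open sets\<close>

definition nonempty_opens :: "'a topology \<Rightarrow> 'i set \<Rightarrow> ('i \<Rightarrow> 'a set) \<Rightarrow> bool" where
  "nonempty_opens T I Q \<longleftrightarrow> (\<forall>i\<in>I. openin T (Q i) \<and> Q i \<noteq> {})"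

text \<open>For finite \<open>I\<close> the boxes form a basis of the product topology, so this is lower
  semicontinuity of \<open>\<phi>\<close> on \<open>(topspace T)\<^sup>I\<close>.\<close>

definition box_lower_semicontinuous :: "'a topology \<Rightarrow> 'i set \<Rightarrow> (('i \<Rightarrow> 'a) \<Rightarrow> real) \<Rightarrow> bool" where
  "box_lower_semicontinuous T I \<phi> \<longleftrightarrow>
     (\<forall>w\<in>Pi I (\<lambda>_. topspace T). \<forall>e>0. \<exists>V. (\<forall>i\<in>I. openin T (V i) \<and> w i \<in> V i) \<and>
        (\<forall>y\<in>Pi I V. \<phi> w - e < \<phi> y))"

lemma box_lower_semicontinuousD:
  assumes "box_lower_semicontinuous T I \<phi>" and "w \<in> Pi I (\<lambda>_. topspace T)" and "0 < e"
  obtains V where "\<forall>i\<in>I. openin T (V i) \<and> w i \<in> V i" and "\<forall>y\<in>Pi I V. \<phi> w - e < \<phi> y"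
proof -
  have "\<exists>V. (\<forall>i\<in>I. openin T (V i) \<and> w i \<in> V i) \<and> (\<forall>y\<in>Pi I V. \<phi> w - e < \<phi> y)"
    using assms unfolding box_lower_semicontinuous_def by simp
  then show ?thesis using that by blast
qed

lemma exists_shrinking_small_oscillation:
  assumes Q: "nonempty_opens T I Q"
    and bdd: "bdd_above (\<phi> ` Pi I (\<lambda>_. topspace T))"
    and lsc: "box_lower_semicontinuous T I \<phi>" and "0 < \<delta>"
  shows "\<exists>Q'. nonempty_opens T I Q' \<and> (\<forall>i\<in>I. Q' i \<subseteq> Q i) \<and>
           (\<forall>y\<in>Pi I Q'. \<forall>z\<in>Pi I Q'. \<phi> y \<le> \<phi> z + \<delta>)"
proof -
  have "Q i \<subseteq> topspace T" if "i \<in> I" for i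
    using Q that openin_subset unfolding nonempty_opens_def by blast
  then have "Pi I Q \<subseteq> Pi I (\<lambda>_. topspace T)" by (simp add: Pi_mono)
  then have bddQ: "bdd_above (\<phi> ` Pi I Q)"
    using bdd by (meson bdd_above_mono image_mono)
  have "Pi I Q \<noteq> {}" using Q by (simp add: nonempty_opens_def)
  define s where "s = Sup (\<phi> ` Pi I Q)"
  obtain w where w: "w \<in> Pi I Q" and "s - \<delta> / 2 < \<phi> w"
    using less_cSup_iff[OF _ bddQ, of "s - \<delta> / 2"] \<open>Pi I Q \<noteq> {}\<close> \<open>0 < \<delta>\<close>
    unfolding s_def by auto
  have "w \<in> Pi I (\<lambda>_. topspace T)" using w \<open>Pi I Q \<subseteq> _\<close> by blast
  then obtain V where V: "\<forall>i\<in>I. openin T (V i) \<and> w i \<in> V i"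
    and above: "\<forall>y\<in>Pi I V. \<phi> w - \<delta> / 2 < \<phi> y"
    using box_lower_semicontinuousD[OF lsc] \<open>0 < \<delta>\<close> half_gt_zero by blast
  define Q' where "Q' i = Q i \<inter> V i" for i
  have "nonempty_opens T I Q'"
    using Q V w unfolding nonempty_opens_def Q'_def by blast
  moreover have "\<phi> y \<le> \<phi> z + \<delta>" if "y \<in> Pi I Q'" "z \<in> Pi I Q'" for y z
  proof -
    have "y \<in> Pi I Q" using that(1) by (simp add: Q'_def Pi_iff)
    then have "\<phi> y \<le> s"
      unfolding s_def by (intro cSup_upper bddQ imageI)
    moreover have "z \<in> Pi I V" using that(2) by (simp add: Q'_def Pi_iff)
    then have "\<phi> w - \<delta> / 2 < \<phi> z" using above by blast
    ultimately show ?thesis using \<open>s - \<delta> / 2 < \<phi> w\<close> by linarith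
  qed
  ultimately show ?thesis by (auto simp: Q'_def)
qed

lemma exists_shrinking_small_oscillation_finite:
  assumes "finite \<Phi>" and Q: "nonempty_opens T I Q"
    and bdd: "\<And>\<phi>. \<phi> \<in> \<Phi> \<Longrightarrow> bdd_above (\<phi> ` Pi I (\<lambda>_. topspace T))"
    and lsc: "\<And>\<phi>. \<phi> \<in> \<Phi> \<Longrightarrow> box_lower_semicontinuous T I \<phi>" and "0 < \<delta>"
  shows "\<exists>Q'. nonempty_opens T I Q' \<and> (\<forall>i\<in>I. Q' i \<subseteq> Q i) \<and>
           (\<forall>\<phi>\<in>\<Phi>. \<forall>y\<in>Pi I Q'. \<forall>z\<in>Pi I Q'. \<phi> y \<le> \<phi> z + \<delta>)"
  using assms(1) bdd lsc
proof (induction \<Phi> rule: finite_induct)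
  case empty
  show ?case using Q by (intro exI[of _ Q]) simp
next
  case (insert \<phi> \<Phi>)
  have "\<And>\<psi>. \<psi> \<in> \<Phi> \<Longrightarrow> bdd_above (\<psi> ` Pi I (\<lambda>_. topspace T))"
    and "\<And>\<psi>. \<psi> \<in> \<Phi> \<Longrightarrow> box_lower_semicontinuous T I \<psi>"
    using insert.prems by auto
  with insert.IH obtain Q1 where Q1: "nonempty_opens T I Q1" "\<forall>i\<in>I. Q1 i \<subseteq> Q i"
    and osc1: "\<forall>\<psi>\<in>\<Phi>. \<forall>y\<in>Pi I Q1. \<forall>z\<in>Pi I Q1. \<psi> y \<le> \<psi> z + \<delta>"
    by blast
  obtain Q2 where Q2: "nonempty_opens T I Q2" "\<forall>i\<in>I. Q2 i \<subseteq> Q1 i"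
    and osc2: "\<forall>y\<in>Pi I Q2. \<forall>z\<in>Pi I Q2. \<phi> y \<le> \<phi> z + \<delta>"
    using exists_shrinking_small_oscillation[OF Q1(1) insert.prems[of \<phi>] \<open>0 < \<delta>\<close>] by auto
  have sub: "Pi I Q2 \<subseteq> Pi I Q1" using Q2(2) by (intro Pi_mono) blast
  have "\<psi> y \<le> \<psi> z + \<delta>" if "\<psi> \<in> insert \<phi> \<Phi>" "y \<in> Pi I Q2" "z \<in> Pi I Q2" for \<psi> y z
    using that osc1 osc2 subsetD[OF sub] by blast
  moreover have "\<forall>i\<in>I. Q2 i \<subseteq> Q i" using Q1(2) Q2(2) by blast
  ultimately show ?case using Q2(1) by blast
qed

lemma bdd_above_norm_sum:
  fixes S :: "'a::real_normed_vector set"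
  assumes "bounded S"
  shows "bdd_above ((\<lambda>y. norm ((\<Sum>i\<in>I. lam i *\<^sub>R y i) - p)) ` Pi I (\<lambda>_. S))"
proof -
  obtain B where B: "\<And>x. x \<in> S \<Longrightarrow> norm x \<le> B"
    using assms bounded_iff by blast
  have "norm ((\<Sum>i\<in>I. lam i *\<^sub>R y i) - p) \<le> (\<Sum>i\<in>I. \<bar>lam i\<bar> * B) + norm p"
    if "y \<in> Pi I (\<lambda>_. S)" for y
  proof -
    have "norm (\<Sum>i\<in>I. lam i *\<^sub>R y i) \<le> (\<Sum>i\<in>I. norm (lam i *\<^sub>R y i))" by (rule norm_sum)
    also have "\<dots> \<le> (\<Sum>i\<in>I. \<bar>lam i\<bar> * B)"
    proof (rule sum_mono)
      fix i assume "i \<in> I"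
      then have "norm (y i) \<le> B" using that B by blast
      then show "norm (lam i *\<^sub>R y i) \<le> \<bar>lam i\<bar> * B" by (simp add: mult_left_mono)
    qed
    finally show ?thesis
      using norm_triangle_ineq4[of "\<Sum>i\<in>I. lam i *\<^sub>R y i" p] by linarith
  qed
  then show ?thesis
    by (intro bdd_aboveI[where M = "(\<Sum>i\<in>I. \<bar>lam i\<bar> * B) + norm p"]) blast
qed

lemma norm_sum_ge_functional:
  assumes f: "bounded_linear f" and f_le: "\<And>x. \<bar>f x\<bar> \<le> norm x"
    and close: "\<forall>i\<in>I. \<bar>f (y i) - f (w i)\<bar> \<le> d"
  shows "f ((\<Sum>i\<in>I. lam i *\<^sub>R w i) - p) - (\<Sum>i\<in>I. \<bar>lam i\<bar>) * d
           \<le> norm ((\<Sum>i\<in>I. lam i *\<^sub>R y i) - p)"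
proof -
  interpret f: bounded_linear f by (rule f)
  have "\<bar>\<Sum>i\<in>I. lam i * (f (y i) - f (w i))\<bar> \<le> (\<Sum>i\<in>I. \<bar>lam i\<bar> * d)"
    using close by (intro order_trans[OF sum_abs sum_mono]) (simp add: abs_mult mult_left_mono)
  then have "f ((\<Sum>i\<in>I. lam i *\<^sub>R w i) - p) - (\<Sum>i\<in>I. \<bar>lam i\<bar>) * d
      \<le> f ((\<Sum>i\<in>I. lam i *\<^sub>R w i) - p) + (\<Sum>i\<in>I. lam i * (f (y i) - f (w i)))"
    by (simp add: sum_distrib_right)
  also have "\<dots> = f ((\<Sum>i\<in>I. lam i *\<^sub>R y i) - p)"
    by (simp add: f.diff f.sum f.scaleR sum_subtractf right_diff_distrib)
  also have "\<dots> \<le> norm ((\<Sum>i\<in>I. lam i *\<^sub>R y i) - p)"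
    using f_le abs_le_D1 by blast
  finally show ?thesis .
qed

lemma box_lower_semicontinuous_norm_sum:
  fixes T :: "'a::real_normed_vector topology"
  assumes weak: "\<And>(f :: 'a \<Rightarrow> real) U. bounded_linear f \<Longrightarrow> open U \<Longrightarrow> openin T {x \<in> topspace T. f x \<in> U}"
  shows "box_lower_semicontinuous T I (\<lambda>y. norm ((\<Sum>i\<in>I. lam i *\<^sub>R y i) - p))"
  unfolding box_lower_semicontinuous_def
proof (intro ballI allI impI)
  fix w and e :: real
  assume w: "w \<in> Pi I (\<lambda>_. topspace T)" and "0 < e"
  define v where "v = (\<Sum>i\<in>I. lam i *\<^sub>R w i) - p"
  obtain f where f: "bounded_linear f" and f_le: "\<And>x. \<bar>f x\<bar> \<le> norm x" and "f v = norm v"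
    using exists_norming_functional by blast
  define L where "L = (\<Sum>i\<in>I. \<bar>lam i\<bar>)"
  define d where "d = e / (L + 1)"
  have "0 \<le> L" unfolding L_def by (simp add: sum_nonneg)
  then have "0 < d" and "L * d < e"
    using \<open>0 < e\<close> by (auto simp: d_def field_simps)
  define V where "V i = {x \<in> topspace T. f x \<in> ball (f (w i)) d}" for i
  have "\<forall>i\<in>I. openin T (V i) \<and> w i \<in> V i"
    using weak[OF f open_ball] w \<open>0 < d\<close> by (auto simp: V_def)
  moreover have "norm v - e < norm ((\<Sum>i\<in>I. lam i *\<^sub>R y i) - p)" if "y \<in> Pi I V" for y
  proof -
    have "\<forall>i\<in>I. \<bar>f (y i) - f (w i)\<bar> \<le> d"
      using that by (auto simp: V_def Pi_iff dist_real_def abs_minus_commute)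
    then have "f v - L * d \<le> norm ((\<Sum>i\<in>I. lam i *\<^sub>R y i) - p)"
      unfolding v_def L_def by (rule norm_sum_ge_functional[OF f f_le])
    then show ?thesis using \<open>f v = norm v\<close> \<open>L * d < e\<close> by linarith
  qed
  ultimately show "\<exists>V. (\<forall>i\<in>I. openin T (V i) \<and> w i \<in> V i) \<and>
      (\<forall>y\<in>Pi I V. norm ((\<Sum>i\<in>I. lam i *\<^sub>R w i) - p) - e < norm ((\<Sum>i\<in>I. lam i *\<^sub>R y i) - p))"
    unfolding v_def by (intro exI[of _ V]) simp
qed

section \<open>Uniform control over the simplex\<close>

lemma exists_grid_point_close_real:
  fixes N :: nat and t :: real
  assumes "0 < N" and "0 \<le> t" and "t \<le> 1"
  shows "\<exists>m\<le>N. \<bar>t - real m / real N\<bar> \<le> 1 / real N"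
proof -
  define m where "m = nat \<lfloor>real N * t\<rfloor>"
  have m: "real m = of_int \<lfloor>real N * t\<rfloor>"
    using assms by (simp add: m_def)
  have "real m \<le> real N * t" and "real N * t < real m + 1"
    unfolding m by linarith+
  moreover have "real N * t \<le> real N" using assms by (simp add: mult_left_le)
  ultimately have "m \<le> N" and "\<bar>real N * t - real m\<bar> \<le> 1" by linarith+
  moreover have "t - real m / real N = (real N * t - real m) / real N"
    using assms(1) by (simp add: field_simps)
  then have "\<bar>t - real m / real N\<bar> = \<bar>real N * t - real m\<bar> / real N"
    by simp
  ultimately show ?thesis
    using assms(1) by (intro exI[of _ m]) (simp add: divide_right_mono)
qed

lemma simplex_pos_unit_interval:
  assumes "lam \<in> simplex_pos n" and "i \<in> {1..n}"
  shows "0 \<le> lam i" and "lam i \<le> 1"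
proof -
  have "\<forall>i\<in>{1..n}. 0 \<le> lam i" and "(\<Sum>i\<in>{1..n}. lam i) = 1"
    using assms(1) by (auto simp: simplex_pos_def)
  then show "0 \<le> lam i" and "lam i \<le> 1"
    using member_le_sum[of i "{1..n}" lam] assms(2) by auto
qed

lemma exists_finite_simplex_net:
  assumes "0 < e"
  obtains \<Lambda> :: "(nat \<Rightarrow> real) set" where "finite \<Lambda>"
    and "\<And>mu. mu \<in> simplex_pos n \<Longrightarrow> \<exists>lam\<in>\<Lambda>. (\<Sum>i\<in>{1..n}. \<bar>mu i - lam i\<bar>) \<le> e"
proof -
  obtain N :: nat where N: "(real n + 1) / e < real N" using reals_Archimedean2 by blast
  have "0 < (real n + 1) / e" using assms by simp
  then have "0 < real N" using N by linarith
  then have "0 < N" by simp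
  have "real n + 1 < e * real N" using N assms by (simp add: field_simps)
  then have "real n * (1 / real N) \<le> e" using \<open>0 < real N\<close> by (simp add: field_simps)
  define \<Lambda> where "\<Lambda> = PiE {1..n} (\<lambda>_. (\<lambda>m. real m / real N) ` {..N})"
  have "\<exists>lam\<in>\<Lambda>. (\<Sum>i\<in>{1..n}. \<bar>mu i - lam i\<bar>) \<le> e" if "mu \<in> simplex_pos n" for mu
  proof -
    have "\<forall>i\<in>{1..n}. \<exists>m. m \<le> N \<and> \<bar>mu i - real m / real N\<bar> \<le> 1 / real N"
      using exists_grid_point_close_real[OF \<open>0 < N\<close>] simplex_pos_unit_interval[OF that] by blast
    then obtain m where m: "\<forall>i\<in>{1..n}. m i \<le> N \<and> \<bar>mu i - real (m i) / real N\<bar> \<le> 1 / real N"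
      by metis
    define lam where "lam = restrict (\<lambda>i. real (m i) / real N) {1..n}"
    have "lam \<in> \<Lambda>" using m unfolding \<Lambda>_def lam_def by force
    moreover have "(\<Sum>i\<in>{1..n}. \<bar>mu i - lam i\<bar>) \<le> real (card {1..n}) * (1 / real N)"
      using m by (intro sum_bounded_above) (simp add: lam_def)
    ultimately show ?thesis using \<open>real n * (1 / real N) \<le> e\<close> by force
  qed
  moreover have "finite \<Lambda>" by (simp add: \<Lambda>_def finite_PiE)
  ultimately show ?thesis using that by blast
qed

lemma norm_sum_scaleR_perturb:
  fixes y :: "'i \<Rightarrow> 'a::real_normed_vector"
  assumes "\<forall>i\<in>I. norm (y i) \<le> B"
  shows "\<bar>norm ((\<Sum>i\<in>I. mu i *\<^sub>R y i) - p) - norm ((\<Sum>i\<in>I. lam i *\<^sub>R y i) - p)\<bar>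
           \<le> (\<Sum>i\<in>I. \<bar>mu i - lam i\<bar>) * B"
proof -
  have "\<bar>norm ((\<Sum>i\<in>I. mu i *\<^sub>R y i) - p) - norm ((\<Sum>i\<in>I. lam i *\<^sub>R y i) - p)\<bar>
      \<le> norm ((\<Sum>i\<in>I. mu i *\<^sub>R y i) - (\<Sum>i\<in>I. lam i *\<^sub>R y i))"
    using norm_triangle_ineq3[of "(\<Sum>i\<in>I. mu i *\<^sub>R y i) - p" "(\<Sum>i\<in>I. lam i *\<^sub>R y i) - p"]
    by simp
  also have "\<dots> = norm (\<Sum>i\<in>I. (mu i - lam i) *\<^sub>R y i)"
    by (simp add: sum_subtractf scaleR_diff_left)
  also have "\<dots> \<le> (\<Sum>i\<in>I. norm ((mu i - lam i) *\<^sub>R y i))" by (rule norm_sum)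
  also have "\<dots> \<le> (\<Sum>i\<in>I. \<bar>mu i - lam i\<bar> * B)"
    using assms by (intro sum_mono) (simp add: mult_left_mono)
  finally show ?thesis by (simp add: sum_distrib_right)
qed

lemma diameter_le_twice_setdist:
  fixes A X :: "'a::metric_space set"
  assumes "X \<noteq> {}" and "0 \<le> e"
    and close: "\<And>p a z. p \<in> X \<Longrightarrow> a \<in> A \<Longrightarrow> z \<in> A \<Longrightarrow> dist a p \<le> dist z p + e"
  shows "diameter A \<le> 2 * setdist X A + 2 * e"
proof (cases "A = {}")
  case True
  then show ?thesis using \<open>0 \<le> e\<close> by simp
next
  case False
  have "dist a b \<le> 2 * setdist X A + 2 * e" if "a \<in> A" "b \<in> A" for a b
  proof -
    have "(dist a b - 2 * e) / 2 \<le> setdist X A"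
      unfolding le_setdist_iff
    proof (intro conjI ballI impI)
      fix p z assume "p \<in> X" "z \<in> A"
      have "dist a b \<le> dist a p + dist b p" by (rule dist_triangle2)
      also have "\<dots> \<le> 2 * dist z p + 2 * e" 
        using close[OF \<open>p \<in> X\<close> that(1) \<open>z \<in> A\<close>] close[OF \<open>p \<in> X\<close> that(2) \<open>z \<in> A\<close>]
        by linarith
      finally show "(dist a b - 2 * e) / 2 \<le> dist p z" by (simp add: dist_commute)
    next
      assume "X = {} \<or> A = {}"
      then show "(dist a b - 2 * e) / 2 \<le> 0" using \<open>X \<noteq> {}\<close> False by blast
    qed
    then show ?thesis by simp
  qed
  then show ?thesis
    unfolding diameter_def using False by (auto intro!: cSUP_least)
qed

lemma exists_shrinking_small_oscillation_norm_sums: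
  fixes T :: "'a::real_normed_vector topology" and I :: "'i set"
  assumes weak: "\<And>(f :: 'a \<Rightarrow> real) U. bounded_linear f \<Longrightarrow> open U \<Longrightarrow> openin T {x \<in> topspace T. f x \<in> U}"
    and bounded: "bounded (topspace T)" and "finite \<Lambda>" and "finite X"
    and Q: "nonempty_opens T I Q" and "0 < \<delta>"
  shows "\<exists>Q'. nonempty_opens T I Q' \<and> (\<forall>i\<in>I. Q' i \<subseteq> Q i) \<and>
           (\<forall>lam\<in>\<Lambda>. \<forall>p\<in>X. \<forall>y\<in>Pi I Q'. \<forall>z\<in>Pi I Q'.
              norm ((\<Sum>i\<in>I. lam i *\<^sub>R y i) - p) \<le> norm ((\<Sum>i\<in>I. lam i *\<^sub>R z i) - p) + \<delta>)"
proof -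
  define \<phi> :: "('i \<Rightarrow> real) \<times> 'a \<Rightarrow> ('i \<Rightarrow> 'a) \<Rightarrow> real"
    where "\<phi> = (\<lambda>(lam, p) y. norm ((\<Sum>i\<in>I. lam i *\<^sub>R y i) - p))"
  have fin: "finite (\<phi> ` (\<Lambda> \<times> X))"
    using \<open>finite \<Lambda>\<close> \<open>finite X\<close> by simp
  have bdd: "bdd_above (\<psi> ` Pi I (\<lambda>_. topspace T))"
    and lsc: "box_lower_semicontinuous T I \<psi>" if \<psi>: "\<psi> \<in> \<phi> ` (\<Lambda> \<times> X)" for \<psi>
  proof -
    obtain lam p where "\<psi> = (\<lambda>y. norm ((\<Sum>i\<in>I. lam i *\<^sub>R y i) - p))"
      using \<psi> by (auto simp: \<phi>_def)
    then show "bdd_above (\<psi> ` Pi I (\<lambda>_. topspace T))" "box_lower_semicontinuous T I \<psi>"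
      using bdd_above_norm_sum[OF bounded] box_lower_semicontinuous_norm_sum[OF weak] by simp_all
  qed
  show ?thesis
    using exists_shrinking_small_oscillation_finite[OF fin Q bdd lsc \<open>0 < \<delta>\<close>]
    by (simp add: \<phi>_def)
qed

lemma exists_shrinking_uniform_on_simplex:
  fixes T :: "'a::real_normed_vector topology" and X :: "'a set"
  assumes weak: "\<And>(f :: 'a \<Rightarrow> real) U. bounded_linear f \<Longrightarrow> open U \<Longrightarrow> openin T {x \<in> topspace T. f x \<in> U}"
    and bounded: "bounded (topspace T)" and "finite X" and "0 < \<epsilon>"
    and Q: "nonempty_opens T {1..n} Q"
  shows "\<exists>Q'. nonempty_opens T {1..n} Q' \<and> (\<forall>i\<in>{1..n}. Q' i \<subseteq> Q i) \<and>
           (\<forall>mu\<in>simplex_pos n. \<forall>p\<in>X. \<forall>a\<in>scaled_msum n mu Q'. \<forall>z\<in>scaled_msum n mu Q'.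
              dist a p \<le> dist z p + \<epsilon>)"
proof -
  obtain B where "0 < B" and B: "\<And>x. x \<in> topspace T \<Longrightarrow> norm x \<le> B"
    using bounded bounded_pos by blast
  define e where "e = \<epsilon> / (4 * B)"
  have "0 < e" and eB: "e * B = \<epsilon> / 4" using \<open>0 < B\<close> \<open>0 < \<epsilon>\<close> by (simp_all add: e_def)
  obtain \<Lambda> where "finite \<Lambda>"
    and net: "\<And>mu. mu \<in> simplex_pos n \<Longrightarrow> \<exists>lam\<in>\<Lambda>. (\<Sum>i\<in>{1..n}. \<bar>mu i - lam i\<bar>) \<le> e"
    using exists_finite_simplex_net[OF \<open>0 < e\<close>] by blast
  have half: "0 < \<epsilon> / 2" using \<open>0 < \<epsilon>\<close> by simp
  obtain Q' where Q': "nonempty_opens T {1..n} Q'" "\<forall>i\<in>{1..n}. Q' i \<subseteq> Q i"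
    and osc: "\<forall>lam\<in>\<Lambda>. \<forall>p\<in>X. \<forall>y\<in>Pi {1..n} Q'. \<forall>z\<in>Pi {1..n} Q'.
      norm ((\<Sum>i\<in>{1..n}. lam i *\<^sub>R y i) - p) \<le> norm ((\<Sum>i\<in>{1..n}. lam i *\<^sub>R z i) - p) + \<epsilon> / 2"
    using exists_shrinking_small_oscillation_norm_sums[OF weak bounded \<open>finite \<Lambda>\<close> \<open>finite X\<close> Q half]
    by blast
  have "dist a p \<le> dist z p + \<epsilon>"
    if mu: "mu \<in> simplex_pos n" and "p \<in> X"
      and az: "a \<in> scaled_msum n mu Q'" "z \<in> scaled_msum n mu Q'" for mu p a z
  proof -
    obtain lam where "lam \<in> \<Lambda>" and lam: "(\<Sum>i\<in>{1..n}. \<bar>mu i - lam i\<bar>) \<le> e"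
      using net[OF mu] by blast
    have perturb: "\<bar>dist (\<Sum>i\<in>{1..n}. mu i *\<^sub>R y i) p - norm ((\<Sum>i\<in>{1..n}. lam i *\<^sub>R y i) - p)\<bar>
        \<le> \<epsilon> / 4"
      if "y \<in> Pi {1..n} Q'" for y
    proof -
      have "y i \<in> topspace T" if "i \<in> {1..n}" for i
        using \<open>y \<in> Pi {1..n} Q'\<close> that Q'(1) openin_subset
        unfolding nonempty_opens_def by blast
      then have "\<forall>i\<in>{1..n}. norm (y i) \<le> B" using B by blast
      from norm_sum_scaleR_perturb[OF this, of mu p lam]
      have "\<bar>norm ((\<Sum>i\<in>{1..n}. mu i *\<^sub>R y i) - p) - norm ((\<Sum>i\<in>{1..n}. lam i *\<^sub>R y i) - p)\<bar>
          \<le> e * B"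
        using lam \<open>0 < B\<close> by (meson mult_right_mono less_imp_le order_trans)
      then show ?thesis using eB by (simp add: dist_norm)
    qed
    obtain ya yz where ya: "ya \<in> Pi {1..n} Q'" "a = (\<Sum>i\<in>{1..n}. mu i *\<^sub>R ya i)"
      and yz: "yz \<in> Pi {1..n} Q'" "z = (\<Sum>i\<in>{1..n}. mu i *\<^sub>R yz i)"
      using az unfolding scaled_msum_def by blast
    have "norm ((\<Sum>i\<in>{1..n}. lam i *\<^sub>R ya i) - p) \<le> norm ((\<Sum>i\<in>{1..n}. lam i *\<^sub>R yz i) - p) + \<epsilon> / 2"
      using osc \<open>lam \<in> \<Lambda>\<close> \<open>p \<in> X\<close> ya(1) yz(1) by blast
    then show ?thesis
      using perturb[OF ya(1)] perturb[OF yz(1)] unfolding ya(2) yz(2) by linarith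
  qed
  then show ?thesis using Q' by blast
qed

lemma openin_weak_topology_preimage:
  assumes "bounded_linear (f :: 'a::real_normed_vector \<Rightarrow> real)" and "open U"
  shows "openin weak_topology {x. f x \<in> U}"
  unfolding weak_topology_def by (rule topology_generated_by_Basis) (use assms in blast)

lemma openin_subtopology_bounded_linear_preimage:
  fixes f :: "'a::real_normed_vector \<Rightarrow> real"
  assumes finer: "\<And>U. openin (subtopology weak_topology D) U \<Longrightarrow> openin \<tau> U"
    and "topspace \<tau> = D" and "bounded_linear f" and "open U"
  shows "openin (subtopology \<tau> C) {y \<in> topspace (subtopology \<tau> C). f y \<in> U}"
proof -
  have "openin \<tau> ({y. f y \<in> U} \<inter> D)"
    using finer openin_weak_topology_preimage[OF assms(3,4)] openin_subtopology_Int by blast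
  then have "openin (subtopology \<tau> C) ({y. f y \<in> U} \<inter> D \<inter> C)"
    by (rule openin_subtopology_Int)
  moreover have "{y. f y \<in> U} \<inter> D \<inter> C = {y \<in> topspace (subtopology \<tau> C). f y \<in> U}"
    using \<open>topspace \<tau> = D\<close> by auto
  ultimately show ?thesis by simp
qed

theorem lemma2p5:
  fixes D C :: "'a::banach set" and \<tau> :: "'a topology"
    and \<epsilon> :: real and n k :: nat and x :: "nat \<Rightarrow> 'a"
    and Ot :: "nat \<Rightarrow> 'a set"
  assumes "closed D" and "bounded D" and "convex D"
    and "topspace \<tau> = D"
    and "locally_convex_topology \<tau>"
    and "\<And>U. openin (subtopology weak_topology D) U \<Longrightarrow> openin \<tau> U"
    and "convex C" and "C \<subseteq> D"
    and "\<epsilon> > 0" and "n \<ge> 1" and "k \<ge> 1"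
    and "\<And>i. i \<in> {1..n} \<Longrightarrow> openin (subtopology \<tau> C) (Ot i) \<and> Ot i \<noteq> {}"
  shows "\<exists>Os :: nat \<Rightarrow> 'a set.
           (\<forall>i\<in>{1..n}. openin (subtopology \<tau> C) (Os i) \<and> Os i \<noteq> {} \<and> Os i \<subseteq> Ot i) \<and>
           (\<forall>lam\<in>simplex_pos n.
              diameter (scaled_msum n lam Os)
                \<le> 2 * setdist (x ` {1..k}) (scaled_msum n lam Os) + \<epsilon>)"
proof -
  let ?T = "subtopology \<tau> C"
  have weak: "openin ?T {y \<in> topspace ?T. f y \<in> U}"
    if "bounded_linear f" "open U" for f :: "'a \<Rightarrow> real" and U
    using openin_subtopology_bounded_linear_preimage[OF assms(6,4) that] .
  have "topspace ?T = C" using assms(4,8) by auto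
  then have bounded: "bounded (topspace ?T)" using assms(2,8) bounded_subset by metis
  have Ot: "nonempty_opens ?T {1..n} Ot" using assms(12) by (simp add: nonempty_opens_def)
  have fin: "finite (x ` {1..k})" and half: "0 < \<epsilon> / 2" using assms(9) by simp_all
  obtain Os where Os: "nonempty_opens ?T {1..n} Os" "\<forall>i\<in>{1..n}. Os i \<subseteq> Ot i"
    and close: "\<forall>lam\<in>simplex_pos n. \<forall>p\<in>x ` {1..k}. \<forall>a\<in>scaled_msum n lam Os.
                  \<forall>z\<in>scaled_msum n lam Os. dist a p \<le> dist z p + \<epsilon> / 2"
    using exists_shrinking_uniform_on_simplex[OF weak bounded fin half Ot] by blast
  have "x ` {1..k} \<noteq> {}" using assms(11) by auto
  then have "diameter (scaled_msum n lam Os) \<le> 2 * setdist (x ` {1..k}) (scaled_msum n lam Os) + \<epsilon>"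
    if "lam \<in> simplex_pos n" for lam
    using diameter_le_twice_setdist[of "x ` {1..k}" "\<epsilon> / 2" "scaled_msum n lam Os"]
      close that half by simp
  then show ?thesis using Os unfolding nonempty_opens_def by blast
qed

end
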